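(* Let $A$ be an MV-algebra and $d$ a $(\odot,\vee)$-derivation on $A$ with $d(1)\in\mathbf{B}(A)$. The following are equivalent: (1) $d$ is isotone (i.e. $x\le y$ implies $d(x)\le d(y)$); (2) $d(x)\le d(1)$ for all $x\in A$; (3) $d(x)=d(1)\odot x$ for all $x\in A$; (4) $d(x\wedge y)=d(x)\wedge d(y)$ for all $x,y\in A$; (5) $d(x\vee y)=d(x)\vee d(y)$ for all $x,y\in A$.
   Context: An MV-algebra is an algebra $(A,\oplus,{}^*,0)$ of type $(2,1,0)$ satisfying: $x\oplus(y\oplus z)=(x\oplus y)\oplus z$, $x\oplus y=y\oplus x$, $x\oplus 0=x$, $x^{**}=x$, $x\oplus 0^*=0^*$, $(x^*\oplus y)^*\oplus y=(y^*\oplus x)^*\oplus x$. Put $1=0^*$ and $x\odot y=(x^*\oplus y^* )^*$. The natural order is $x\le y$ iff $x^*\oplus y=1$, with lattice operations $x\vee y=(x\odot y^* )\oplus y$, $x\wedge y=x\odot(x^*\oplus y)$. The Boolean center is $\mathbf{B}(A)=\{x\in A: x\oplus x=x\}$. A $(\odot,\vee)$-derivation on $A$ is a map $d:A\to A$ with $d(x\odot y)=(d(x)\odot y)\vee(x\odot d(y))$ for all $x,y\in A$. *)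

theory Defs
  imports Main
begin

locale mv_algebra =
  fixes A :: "'a set"
    and oplus :: "'a \<Rightarrow> 'a \<Rightarrow> 'a"  (infixl "\<oplus>" 65)
    and neg :: "'a \<Rightarrow> 'a"
    and zero :: "'a"
  assumes oplus_closed: "\<lbrakk>x \<in> A; y \<in> A\<rbrakk> \<Longrightarrow> x \<oplus> y \<in> A"
    and neg_closed: "x \<in> A \<Longrightarrow> neg x \<in> A"
    and zero_closed: "zero \<in> A"
    and oplus_assoc: "\<lbrakk>x \<in> A; y \<in> A; z \<in> A\<rbrakk> \<Longrightarrow> x \<oplus> (y \<oplus> z) = (x \<oplus> y) \<oplus> z"
    and oplus_comm: "\<lbrakk>x \<in> A; y \<in> A\<rbrakk> \<Longrightarrow> x \<oplus> y = y \<oplus> x"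
    and oplus_zero: "x \<in> A \<Longrightarrow> x \<oplus> zero = x"
    and neg_neg: "x \<in> A \<Longrightarrow> neg (neg x) = x"
    and oplus_one: "x \<in> A \<Longrightarrow> x \<oplus> neg zero = neg zero"
    and luk: "\<lbrakk>x \<in> A; y \<in> A\<rbrakk> \<Longrightarrow> neg (neg x \<oplus> y) \<oplus> y = neg (neg y \<oplus> x) \<oplus> x"
begin

definition one :: 'a where "one = neg zero"

definition odot :: "'a \<Rightarrow> 'a \<Rightarrow> 'a" (infixl "\<odot>" 70)
  where "x \<odot> y = neg (neg x \<oplus> neg y)"

definition leq :: "'a \<Rightarrow> 'a \<Rightarrow> bool"
  where "leq x y \<longleftrightarrow> neg x \<oplus> y = one"

definition join :: "'a \<Rightarrow> 'a \<Rightarrow> 'a"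
  where "join x y = (x \<odot> neg y) \<oplus> y"

definition meet :: "'a \<Rightarrow> 'a \<Rightarrow> 'a"
  where "meet x y = x \<odot> (neg x \<oplus> y)"

definition boolean_center :: "'a set"
  where "boolean_center = {x \<in> A. x \<oplus> x = x}"

definition odot_join_derivation :: "('a \<Rightarrow> 'a) \<Rightarrow> bool"
  where "odot_join_derivation d \<longleftrightarrow> (\<forall>x\<in>A. d x \<in> A) \<and>
     (\<forall>x\<in>A. \<forall>y\<in>A. d (x \<odot> y) = join (d x \<odot> y) (x \<odot> d y))"

end

end

theory Submission
  imports Defs
begin

text \<open>Every \<open>(\<odot>,\<or>)\<close>-derivation satisfies \<open>d 0 = 0\<close> and \<open>x \<odot> d 1 \<le> d x \<le> x\<close>.
  If \<open>a = d 1\<close> is Boolean, then \<open>z \<le> a\<close> and \<open>z \<le> x\<close> give \<open>z \<le> a \<odot> x\<close> (on the Boolean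
  element \<open>a\<close> the product coincides with the meet), so \<open>d x \<le> d 1\<close> already forces
  \<open>d x = d 1 \<odot> x\<close>. Multiplication by a Boolean element distributes over \<open>\<oplus>\<close>, hence
  preserves joins and meets and is isotone; conversely, any map preserving meets or joins is
  isotone, and an isotone \<open>d\<close> satisfies \<open>d x \<le> d 1\<close>.\<close>

context mv_algebra
begin

declare oplus_closed [simp] neg_closed [simp] zero_closed [simp] neg_neg [simp] oplus_zero [simp]

lemma one_closed [simp]: "one \<in> A"
  by (simp add: one_def)

lemma odot_closed [simp]: "x \<in> A \<Longrightarrow> y \<in> A \<Longrightarrow> x \<odot> y \<in> A"
  by (simp add: odot_def)

lemma join_closed [simp]: "x \<in> A \<Longrightarrow> y \<in> A \<Longrightarrow> join x y \<in> A"
  by (simp add: join_def)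

lemma meet_closed [simp]: "x \<in> A \<Longrightarrow> y \<in> A \<Longrightarrow> meet x y \<in> A"
  by (simp add: meet_def)

lemma neg_zero [simp]: "neg zero = one"
  by (simp add: one_def)

lemma neg_one [simp]: "neg one = zero"
  unfolding one_def by (rule neg_neg [OF zero_closed])

lemma zero_oplus [simp]: "x \<in> A \<Longrightarrow> zero \<oplus> x = x"
  by (metis oplus_comm oplus_zero zero_closed)

lemma oplus_one_right [simp]: "x \<in> A \<Longrightarrow> x \<oplus> one = one"
  using oplus_one unfolding one_def .

lemma one_oplus [simp]: "x \<in> A \<Longrightarrow> one \<oplus> x = one"
  by (metis oplus_comm oplus_one_right one_closed)

lemma oplus_left_commute: "x \<in> A \<Longrightarrow> y \<in> A \<Longrightarrow> z \<in> A \<Longrightarrow> x \<oplus> (y \<oplus> z) = y \<oplus> (x \<oplus> z)"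
  by (metis oplus_assoc oplus_comm)

lemma neg_oplus_self [simp]: "x \<in> A \<Longrightarrow> neg x \<oplus> x = one"
  using luk[of x one] by simp

lemma odot_comm: "x \<in> A \<Longrightarrow> y \<in> A \<Longrightarrow> x \<odot> y = y \<odot> x"
  by (simp add: odot_def oplus_comm)

lemma odot_assoc: "x \<in> A \<Longrightarrow> y \<in> A \<Longrightarrow> z \<in> A \<Longrightarrow> x \<odot> (y \<odot> z) = (x \<odot> y) \<odot> z"
  by (simp add: odot_def oplus_assoc)

lemma odot_one [simp]: "x \<in> A \<Longrightarrow> x \<odot> one = x"
  by (simp add: odot_def)

lemma odot_zero [simp]: "x \<in> A \<Longrightarrow> x \<odot> zero = zero"
  by (simp add: odot_def)

lemma zero_odot [simp]: "x \<in> A \<Longrightarrow> zero \<odot> x = zero"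
  by (simp add: odot_def)

lemma odot_neg_self [simp]: "x \<in> A \<Longrightarrow> x \<odot> neg x = zero"
  by (simp add: odot_def)

lemma neg_odot: "x \<in> A \<Longrightarrow> y \<in> A \<Longrightarrow> neg (x \<odot> y) = neg x \<oplus> neg y"
  by (simp add: odot_def)

lemma leq_iff_odot_neg: "x \<in> A \<Longrightarrow> y \<in> A \<Longrightarrow> leq x y \<longleftrightarrow> x \<odot> neg y = zero"
  unfolding leq_def odot_def by (metis neg_neg neg_zero neg_one oplus_closed neg_closed)

lemma join_def': "x \<in> A \<Longrightarrow> y \<in> A \<Longrightarrow> join x y = neg (neg x \<oplus> y) \<oplus> y"
  by (simp add: join_def odot_def)

lemma join_comm: "x \<in> A \<Longrightarrow> y \<in> A \<Longrightarrow> join x y = join y x"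
  using luk by (simp add: join_def')

lemma join_zero_zero: "join zero zero = zero"
  by (simp add: join_def')

lemma meet_eq_neg_join_neg: "x \<in> A \<Longrightarrow> y \<in> A \<Longrightarrow> meet x y = neg (join (neg x) (neg y))"
proof -
  assume xy: "x \<in> A" "y \<in> A"
  have "join (neg x) (neg y) = neg (x \<oplus> neg y) \<oplus> neg y"
    using xy by (simp add: join_def')
  also have "\<dots> = neg (y \<oplus> neg x) \<oplus> neg x"
    using xy luk[of "neg x" "neg y"] by simp
  also have "\<dots> = neg x \<oplus> neg (neg x \<oplus> y)"
    using xy by (simp add: oplus_comm)
  finally show ?thesis
    using xy by (simp add: meet_def odot_def)
qed

lemma meet_comm: "x \<in> A \<Longrightarrow> y \<in> A \<Longrightarrow> meet x y = meet y x"
  by (simp add: meet_eq_neg_join_neg join_comm)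

subsection \<open>The natural order\<close>

lemma leq_one: "x \<in> A \<Longrightarrow> leq x one"
  by (simp add: leq_def)

lemma leq_zero_iff: "x \<in> A \<Longrightarrow> leq x zero \<Longrightarrow> x = zero"
  by (metis leq_def oplus_zero neg_closed neg_neg neg_one)

lemma join_eq_right: "x \<in> A \<Longrightarrow> y \<in> A \<Longrightarrow> leq x y \<Longrightarrow> join x y = y"
  by (simp add: join_def' leq_def)

lemma meet_eq_left: "x \<in> A \<Longrightarrow> y \<in> A \<Longrightarrow> leq x y \<Longrightarrow> meet x y = x"
  by (simp add: meet_def leq_def)

lemma leq_antisym: "x \<in> A \<Longrightarrow> y \<in> A \<Longrightarrow> leq x y \<Longrightarrow> leq y x \<Longrightarrow> x = y"
  by (metis join_eq_right join_comm)

lemma leq_imp_eq_oplus: "x \<in> A \<Longrightarrow> y \<in> A \<Longrightarrow> leq x y \<Longrightarrow> y = (y \<odot> neg x) \<oplus> x"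
  by (metis join_eq_right join_comm join_def neg_neg)

lemma leq_trans: "x \<in> A \<Longrightarrow> y \<in> A \<Longrightarrow> z \<in> A \<Longrightarrow> leq x y \<Longrightarrow> leq y z \<Longrightarrow> leq x z"
proof -
  assume xyz: "x \<in> A" "y \<in> A" "z \<in> A" and "leq x y" "leq y z"
  then have y: "y = (y \<odot> neg x) \<oplus> x" and z: "z = (z \<odot> neg y) \<oplus> y"
    by (simp_all add: leq_imp_eq_oplus)
  have "neg x \<oplus> z = ((z \<odot> neg y) \<oplus> (y \<odot> neg x)) \<oplus> (neg x \<oplus> x)"
    using xyz by (subst z, subst y) (simp add: oplus_assoc[symmetric] oplus_comm oplus_left_commute)
  then show ?thesis
    using xyz by (simp add: leq_def)
qed

lemma oplus_mono: "x \<in> A \<Longrightarrow> y \<in> A \<Longrightarrow> z \<in> A \<Longrightarrow> leq y z \<Longrightarrow> leq (x \<oplus> y) (x \<oplus> z)"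
proof -
  assume xyz: "x \<in> A" "y \<in> A" "z \<in> A" and "leq y z"
  then have z: "z = (z \<odot> neg y) \<oplus> y"
    by (simp add: leq_imp_eq_oplus)
  have "neg (x \<oplus> y) \<oplus> (x \<oplus> z) = (z \<odot> neg y) \<oplus> (neg (x \<oplus> y) \<oplus> (x \<oplus> y))"
    using xyz by (subst z) (simp add: oplus_assoc[symmetric] oplus_comm oplus_left_commute)
  then show ?thesis
    using xyz by (simp add: leq_def)
qed

lemma neg_antimono: "x \<in> A \<Longrightarrow> y \<in> A \<Longrightarrow> leq x y \<Longrightarrow> leq (neg y) (neg x)"
  by (simp add: leq_def oplus_comm)

lemma odot_mono: "x \<in> A \<Longrightarrow> y \<in> A \<Longrightarrow> z \<in> A \<Longrightarrow> leq y z \<Longrightarrow> leq (x \<odot> y) (x \<odot> z)"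
  unfolding odot_def by (simp add: neg_antimono oplus_mono)

lemma odot_le_left: "x \<in> A \<Longrightarrow> y \<in> A \<Longrightarrow> leq (x \<odot> y) x"
  using odot_mono[of x y one] leq_one by simp

lemma odot_le_right: "x \<in> A \<Longrightarrow> y \<in> A \<Longrightarrow> leq (x \<odot> y) y"
  using odot_le_left odot_comm by metis

lemma le_oplus_left: "x \<in> A \<Longrightarrow> y \<in> A \<Longrightarrow> leq y (x \<oplus> y)"
  by (metis leq_def oplus_left_commute neg_closed neg_oplus_self oplus_one_right)

lemma join_upper_right: "x \<in> A \<Longrightarrow> y \<in> A \<Longrightarrow> leq y (join x y)"
  unfolding join_def' leq_def by (simp add: oplus_left_commute[of "neg y"])

lemma join_upper_left: "x \<in> A \<Longrightarrow> y \<in> A \<Longrightarrow> leq x (join x y)"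
  by (metis join_upper_right join_comm)

lemma join_least: "x \<in> A \<Longrightarrow> y \<in> A \<Longrightarrow> z \<in> A \<Longrightarrow> leq x z \<Longrightarrow> leq y z \<Longrightarrow> leq (join x y) z"
proof -
  assume xyz: "x \<in> A" "y \<in> A" "z \<in> A" and "leq x z" "leq y z"
  then have "leq (y \<oplus> (neg y \<odot> x)) (y \<oplus> (neg y \<odot> z))"
    by (simp add: odot_mono oplus_mono)
  then have "leq (join x y) (join z y)"
    using xyz by (simp add: join_def oplus_comm odot_comm)
  then show ?thesis
    using xyz \<open>leq y z\<close> by (metis join_eq_right join_comm)
qed

lemma meet_lower_right: "x \<in> A \<Longrightarrow> y \<in> A \<Longrightarrow> leq (meet x y) y"
  by (simp add: meet_eq_neg_join_neg join_def' leq_def oplus_assoc[symmetric])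

lemma meet_lower_left: "x \<in> A \<Longrightarrow> y \<in> A \<Longrightarrow> leq (meet x y) x"
  by (metis meet_lower_right meet_comm)

lemma meet_greatest: "x \<in> A \<Longrightarrow> y \<in> A \<Longrightarrow> z \<in> A \<Longrightarrow> leq z x \<Longrightarrow> leq z y \<Longrightarrow> leq z (meet x y)"
  using neg_antimono[of "join (neg x) (neg y)" "neg z"]
  by (simp add: meet_eq_neg_join_neg neg_antimono join_least)

lemma odot_oplus_le: "x \<in> A \<Longrightarrow> y \<in> A \<Longrightarrow> z \<in> A \<Longrightarrow> leq (x \<odot> (y \<oplus> z)) ((x \<odot> y) \<oplus> z)"
proof -
  assume xyz: "x \<in> A" "y \<in> A" "z \<in> A"
  have luk_y: "neg x \<oplus> neg (neg x \<oplus> neg y) = neg (x \<oplus> y) \<oplus> y"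
    using xyz luk[of y "neg x"] by (simp add: oplus_comm)
  have "neg (x \<odot> (y \<oplus> z)) \<oplus> ((x \<odot> y) \<oplus> z)
      = (neg x \<oplus> neg (neg x \<oplus> neg y)) \<oplus> (neg (y \<oplus> z) \<oplus> z)"
    using xyz by (simp add: odot_def oplus_assoc[symmetric] oplus_comm oplus_left_commute)
  also have "\<dots> = neg (x \<oplus> y) \<oplus> (y \<oplus> (neg (y \<oplus> z) \<oplus> z))"
    using xyz by (simp only: luk_y oplus_assoc[symmetric] oplus_closed neg_closed)
  also have "\<dots> = neg (x \<oplus> y) \<oplus> (neg (y \<oplus> z) \<oplus> (y \<oplus> z))"
    using xyz by (simp only: oplus_left_commute[of y] oplus_closed neg_closed)
  finally show ?thesis
    using xyz by (simp add: leq_def)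
qed

subsection \<open>Multiplication by a Boolean element\<close>

lemma boolean_centerD: "a \<in> boolean_center \<Longrightarrow> a \<in> A \<and> a \<oplus> a = a"
  by (simp add: boolean_center_def)

lemma boolean_center_odot_self: "a \<in> boolean_center \<Longrightarrow> a \<odot> a = a"
proof -
  assume "a \<in> boolean_center"
  then have a: "a \<in> A" "a \<oplus> a = a"
    by (simp_all add: boolean_centerD)
  have "join a (neg a) = one"
    using a join_comm[of a "neg a"] by (simp add: join_def')
  then have "leq a (a \<odot> a)"
    using a by (simp add: join_def leq_def oplus_comm)
  then show ?thesis
    using a odot_le_left leq_antisym by simp
qed

lemma boolean_center_meet: "a \<in> boolean_center \<Longrightarrow> z \<in> A \<Longrightarrow> meet a z = a \<odot> z"
proof -
  assume B: "a \<in> boolean_center" and z: "z \<in> A"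
  then have a: "a \<in> A"
    by (simp add: boolean_centerD)
  have "leq (a \<odot> z) (meet a z)"
    using a z by (simp add: meet_def odot_mono le_oplus_left)
  moreover have "meet a z = a \<odot> meet a z"
    using a z boolean_center_odot_self[OF B] by (simp add: meet_def odot_assoc)
  then have "leq (meet a z) (a \<odot> z)"
    using a z by (metis meet_closed meet_lower_right odot_mono)
  ultimately show ?thesis
    using a z leq_antisym by simp
qed

lemma le_odot_boolean_center:
  "a \<in> boolean_center \<Longrightarrow> z \<in> A \<Longrightarrow> w \<in> A \<Longrightarrow> leq z a \<Longrightarrow> leq z w \<Longrightarrow> leq z (a \<odot> w)"
  by (metis boolean_centerD boolean_center_meet meet_comm meet_eq_left odot_mono)

lemma boolean_center_odot_oplus_distrib:
  assumes B: "a \<in> boolean_center" and u: "u \<in> A" and v: "v \<in> A"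
  shows "a \<odot> (u \<oplus> v) = (a \<odot> u) \<oplus> (a \<odot> v)"
proof (rule leq_antisym)
  have a: "a \<in> A" "a \<oplus> a = a"
    using B by (simp_all add: boolean_centerD)
  txt \<open>Write \<open>a \<odot> (u \<oplus> v) = a \<odot> a \<odot> (u \<oplus> v)\<close> and apply \<open>odot_oplus_le\<close> once per factor \<open>a\<close>.\<close>
  have "leq (a \<odot> (a \<odot> (u \<oplus> v))) (a \<odot> ((a \<odot> u) \<oplus> v))"
    using a u v by (simp add: odot_mono odot_oplus_le)
  moreover have "leq (a \<odot> (v \<oplus> (a \<odot> u))) ((a \<odot> v) \<oplus> (a \<odot> u))"
    using a u v by (simp add: odot_oplus_le)
  ultimately show "leq (a \<odot> (u \<oplus> v)) ((a \<odot> u) \<oplus> (a \<odot> v))"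
    using a u v boolean_center_odot_self[OF B]
    by (metis leq_trans odot_assoc odot_closed oplus_closed oplus_comm)
  have "leq ((a \<odot> u) \<oplus> (a \<odot> v)) (a \<oplus> a)"
    using a u v oplus_mono[of "a \<odot> u" "a \<odot> v" a] oplus_mono[of a "a \<odot> u" a]
    by (metis leq_trans odot_closed odot_le_left oplus_closed oplus_comm)
  moreover have "leq ((a \<odot> u) \<oplus> (a \<odot> v)) (u \<oplus> v)"
    using a u v oplus_mono[of "a \<odot> u" "a \<odot> v" v] oplus_mono[of v "a \<odot> u" u]
    by (metis leq_trans odot_closed odot_le_right oplus_closed oplus_comm)
  ultimately show "leq ((a \<odot> u) \<oplus> (a \<odot> v)) (a \<odot> (u \<oplus> v))"
    using a u v B by (simp add: le_odot_boolean_center)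
qed (use B u v boolean_centerD in simp_all)

lemma boolean_center_odot_join:
  assumes B: "a \<in> boolean_center" and x: "x \<in> A" and y: "y \<in> A"
  shows "a \<odot> join x y = join (a \<odot> x) (a \<odot> y)"
proof -
  have a: "a \<in> A"
    using B by (simp add: boolean_centerD)
  have "(a \<odot> x) \<odot> neg (a \<odot> y) = x \<odot> (a \<odot> (neg a \<oplus> neg y))"
    using a x y by (simp add: neg_odot odot_assoc odot_comm)
  also have "a \<odot> (neg a \<oplus> neg y) = a \<odot> neg y"
    using boolean_center_meet[OF B, of "neg y"] y by (simp add: meet_def)
  also have "x \<odot> (a \<odot> neg y) = a \<odot> (x \<odot> neg y)"
    using a x y by (metis odot_assoc odot_comm neg_closed)
  finally show ?thesis
    using B x y by (simp add: join_def boolean_center_odot_oplus_distrib)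
qed

lemma boolean_center_odot_meet:
  assumes B: "a \<in> boolean_center" and x: "x \<in> A" and y: "y \<in> A"
  shows "a \<odot> meet x y = meet (a \<odot> x) (a \<odot> y)"
proof (rule leq_antisym)
  have a: "a \<in> A"
    using B by (simp add: boolean_centerD)
  show "leq (a \<odot> meet x y) (meet (a \<odot> x) (a \<odot> y))"
    using a x y by (simp add: meet_greatest odot_mono meet_lower_left meet_lower_right)
  let ?m = "meet (a \<odot> x) (a \<odot> y)"
  have "leq ?m x" "leq ?m y" "leq ?m a"
    using a x y meet_lower_left meet_lower_right odot_le_left odot_le_right
    by (metis leq_trans meet_closed odot_closed)+
  then show "leq ?m (a \<odot> meet x y)"
    using a x y B by (simp add: le_odot_boolean_center meet_greatest)
qed (use B x y boolean_centerD in simp_all)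

subsection \<open>Derivations\<close>

lemma derivation_closed: "odot_join_derivation d \<Longrightarrow> x \<in> A \<Longrightarrow> d x \<in> A"
  by (simp add: odot_join_derivation_def)

lemma derivation_odot:
  "odot_join_derivation d \<Longrightarrow> x \<in> A \<Longrightarrow> y \<in> A \<Longrightarrow> d (x \<odot> y) = join (d x \<odot> y) (x \<odot> d y)"
  by (simp add: odot_join_derivation_def)

lemma derivation_zero: "odot_join_derivation d \<Longrightarrow> d zero = zero"
  using derivation_odot[of d zero zero] derivation_closed[of d zero] by (simp add: join_zero_zero)

lemma derivation_le: "odot_join_derivation d \<Longrightarrow> x \<in> A \<Longrightarrow> leq (d x) x"
proof -
  assume D: "odot_join_derivation d" and x: "x \<in> A"
  have "zero = join (d x \<odot> neg x) (x \<odot> d (neg x))"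
    using x derivation_zero[OF D] derivation_odot[OF D x, of "neg x"] by simp
  then have "d x \<odot> neg x = zero"
    using x derivation_closed[OF D] join_upper_left leq_zero_iff
    by (metis neg_closed odot_closed)
  then show ?thesis
    using x derivation_closed[OF D] by (simp add: leq_iff_odot_neg)
qed

lemma odot_derivation_one_le: "odot_join_derivation d \<Longrightarrow> x \<in> A \<Longrightarrow> leq (x \<odot> d one) (d x)"
  using derivation_odot[of d x one] derivation_closed join_upper_right
  by (metis odot_one odot_closed one_closed)

lemma derivation_eq_odot_one:
  assumes D: "odot_join_derivation d" and B: "d one \<in> boolean_center"
    and x: "x \<in> A" and "leq (d x) (d one)"
  shows "d x = d one \<odot> x"
  using assms derivation_closed[OF D] derivation_le[OF D x] odot_derivation_one_le[OF D x]
  by (metis boolean_centerD le_odot_boolean_center leq_antisym odot_closed odot_comm)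

lemma mono_if_preserves_meet:
  assumes "\<And>x. x \<in> A \<Longrightarrow> f x \<in> A" and "\<And>x y. x \<in> A \<Longrightarrow> y \<in> A \<Longrightarrow> f (meet x y) = meet (f x) (f y)"
    and "x \<in> A" "y \<in> A" "leq x y"
  shows "leq (f x) (f y)"
proof -
  have "f x = meet (f x) (f y)"
    using assms(2)[of x y] assms(3-5) by (simp add: meet_eq_left)
  then show ?thesis
    using assms(1,3,4) meet_lower_right[of "f x" "f y"] by simp
qed

lemma mono_if_preserves_join:
  assumes "\<And>x. x \<in> A \<Longrightarrow> f x \<in> A" and "\<And>x y. x \<in> A \<Longrightarrow> y \<in> A \<Longrightarrow> f (join x y) = join (f x) (f y)"
    and "x \<in> A" "y \<in> A" "leq x y"
  shows "leq (f x) (f y)"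
proof -
  have "f y = join (f x) (f y)"
    using assms(2)[of x y] assms(3-5) by (simp add: join_eq_right)
  then show ?thesis
    using assms(1,3,4) join_upper_left[of "f x" "f y"] by simp
qed

end

theorem proposition3p20:
  assumes "mv_algebra A oplus neg zero"
    and "mv_algebra.odot_join_derivation A oplus neg d"
    and "d (mv_algebra.one neg zero) \<in> mv_algebra.boolean_center A oplus"
  shows "((\<forall>x\<in>A. \<forall>y\<in>A. mv_algebra.leq oplus neg zero x y \<longrightarrow> mv_algebra.leq oplus neg zero (d x) (d y))
           \<longleftrightarrow> (\<forall>x\<in>A. mv_algebra.leq oplus neg zero (d x) (d (mv_algebra.one neg zero))))
       \<and> ((\<forall>x\<in>A. mv_algebra.leq oplus neg zero (d x) (d (mv_algebra.one neg zero)))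
           \<longleftrightarrow> (\<forall>x\<in>A. d x = mv_algebra.odot oplus neg (d (mv_algebra.one neg zero)) x))
       \<and> ((\<forall>x\<in>A. d x = mv_algebra.odot oplus neg (d (mv_algebra.one neg zero)) x)
           \<longleftrightarrow> (\<forall>x\<in>A. \<forall>y\<in>A. d (mv_algebra.meet oplus neg x y) = mv_algebra.meet oplus neg (d x) (d y)))
       \<and> ((\<forall>x\<in>A. \<forall>y\<in>A. d (mv_algebra.meet oplus neg x y) = mv_algebra.meet oplus neg (d x) (d y))
           \<longleftrightarrow> (\<forall>x\<in>A. \<forall>y\<in>A. d (mv_algebra.join oplus neg x y) = mv_algebra.join oplus neg (d x) (d y)))"
proof -
  interpret mv_algebra A oplus neg zero by fact
  note D = assms(2) and B = assms(3)
  note dA = derivation_closed[OF D]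
  let ?isotone = "\<forall>x\<in>A. \<forall>y\<in>A. leq x y \<longrightarrow> leq (d x) (d y)"
  let ?bounded = "\<forall>x\<in>A. leq (d x) (d one)"
  let ?multiple = "\<forall>x\<in>A. d x = d one \<odot> x"
  let ?meet = "\<forall>x\<in>A. \<forall>y\<in>A. d (meet x y) = meet (d x) (d y)"
  let ?join = "\<forall>x\<in>A. \<forall>y\<in>A. d (join x y) = join (d x) (d y)"
  have "?isotone \<Longrightarrow> ?bounded"
    using leq_one by simp
  moreover have "?bounded \<Longrightarrow> ?multiple"
    using derivation_eq_odot_one[OF D B] by blast
  moreover have "?multiple \<Longrightarrow> ?isotone"
    using B boolean_centerD odot_mono by metis
  moreover have "?multiple \<Longrightarrow> ?meet"
    using B boolean_center_odot_meet meet_closed by metis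
  moreover have "?multiple \<Longrightarrow> ?join"
    using B boolean_center_odot_join join_closed by metis
  moreover have "?meet \<Longrightarrow> ?isotone"
    using mono_if_preserves_meet[of d] dA by blast
  moreover have "?join \<Longrightarrow> ?isotone"
    using mono_if_preserves_join[of d] dA by blast
  ultimately show ?thesis
    by blast
qed

end
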